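(* Let $S$ be a set of $n$ points in $\mathbb{R}^k$ under an $L_p$ metric $d$ ($1\le p<\infty$). Consider the following level-by-level construction: set $S_1=S$; given a nonempty $S_i$, choose a pivot $p_i$ uniformly at random from $S_i$ (independently of previous levels), let $d_i=d(p_i,S_i)$, form the axis-aligned grid $G_i$ with boxes of side length $d_i/(6k)$, let $S_i'$ be the set of points $x\in S_i$ such that no other point of $S_i$ lies in the $3^k$ boxes of $G_i$ consisting of the box containing $x$ and its bordering boxes, set $S_{i+1}=S_i\setminus S_i'$, and recurse on $S_{i+1}$ if it is nonempty. Then with high probability the construction makes $O(\log n)$ recursive calls, i.e., the resulting sparse partition has $O(\log n)$ levels.
   Context: $d(x,T)=\min\{d(x,y):y\in T\setminus\{x\}\}$. A bound holds with high probability on input size $n$ if it holds with probability at least $1-1/n^c$ for some constant $c>0$. *)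

theory Defs
  imports "HOL-Analysis.Analysis" "HOL-Probability.Probability"
begin

text \<open>Points of R^k are modelled as vectors of type real^'k, with k = CARD('k).\<close>

definition lp_dist :: "real \<Rightarrow> real^'k \<Rightarrow> real^'k \<Rightarrow> real" where
  "lp_dist p x y = (\<Sum>i\<in>UNIV. \<bar>x$i - y$i\<bar> powr p) powr (1 / p)"

text \<open>d(x,T) = min over T minus x of the distance to x (used only when T has another point).\<close>
definition set_dist :: "real \<Rightarrow> real^'k \<Rightarrow> (real^'k) set \<Rightarrow> real" where
  "set_dist p x T = Min ((\<lambda>y. lp_dist p x y) ` (T - {x}))"

definition grid_box :: "real \<Rightarrow> real^'k \<Rightarrow> ('k \<Rightarrow> int)" where
  "grid_box s x = (\<lambda>i. \<lfloor>x$i / s\<rfloor>)"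

definition grid_isolated :: "real \<Rightarrow> (real^'k) set \<Rightarrow> real^'k \<Rightarrow> bool" where
  "grid_isolated s T x \<longleftrightarrow>
     \<not> (\<exists>y\<in>T. y \<noteq> x \<and> (\<forall>i. \<bar>grid_box s y i - grid_box s x i\<bar> \<le> 1))"

text \<open>One level: given S_i and pivot q, compute S_{i+1} = S_i - S_i'.
  For a singleton S_i (d_i undefined) the single point is isolated in every grid,
  so S_{i+1} is empty.\<close>
definition next_level :: "real \<Rightarrow> (real^'k) set \<Rightarrow> real^'k \<Rightarrow> (real^'k) set" where
  "next_level p S q =
     (if card S \<le> 1 then {}
      else (let d = set_dist p q S; s = d / (6 * real CARD('k))
            in S - {x\<in>S. grid_isolated s S x}))"

primrec levels_fuel :: "nat \<Rightarrow> real \<Rightarrow> (real^'k) set \<Rightarrow> nat pmf" where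
  "levels_fuel 0 p S = return_pmf 0"
| "levels_fuel (Suc m) p S =
     (if S = {} then return_pmf 0
      else bind_pmf (pmf_of_set S) (\<lambda>q. map_pmf Suc (levels_fuel m p (next_level p S q))))"

text \<open>Each level removes at least the pivot, so card S levels of fuel suffice and this is
  exactly the number of levels of the construction started at S_1 = S.\<close>
definition num_levels :: "real \<Rightarrow> (real^'k) set \<Rightarrow> nat pmf" where
  "num_levels p S = levels_fuel (card S) p S"

end

theory Submission
  imports Defs
begin

text \<open>
  If q is the pivot of a level with d = d(q, S), then two points in neighbouring boxes of the
  grid with side d/(6k) are at L_p-distance at most d/3, so every point x with d(x, S) \<ge> d
  is isolated: only the points with d(x, S) < d(q, S) pass to the next level. Summed over the
  |S| choices of q this counts ordered pairs (x, q) with d(x, S) < d(q, S), at most |S|^2/2,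
  so the next level has expected size at most |S|/2. By induction the probability of more
  than m levels is at most |S| 2^-m, which is 1/|S| for m about 3 log2 |S|.
\<close>

lemma measure_bind_pmf_of_set:
  assumes "finite S" "S \<noteq> {}"
  shows "measure_pmf.prob (bind_pmf (pmf_of_set S) N) X =
           (\<Sum>x\<in>S. measure_pmf.prob (N x) X) / card S"
proof -
  have "emeasure (measure_pmf (bind_pmf (pmf_of_set S) N)) X = (\<Sum>x\<in>S. emeasure (N x) X) / card S"
    using assms by (simp add: nn_integral_pmf_of_set)
  also have "\<dots> = ennreal ((\<Sum>x\<in>S. measure_pmf.prob (N x) X) / card S)"
    using assms
    by (simp add: measure_pmf.emeasure_eq_measure sum_ennreal ennreal_of_nat_eq_real_of_nat
        divide_ennreal sum_nonneg card_gt_0_iff)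
  finally show ?thesis
    by (simp add: measure_pmf.emeasure_eq_measure sum_nonneg)
qed

lemma lp_dist_pos:
  fixes x y :: "real^'k"
  assumes "1 \<le> p" "x \<noteq> y"
  shows "0 < lp_dist p x y"
proof -
  obtain i where "x$i \<noteq> y$i"
    using assms(2) by (auto simp: vec_eq_iff)
  then have "0 < (\<Sum>j\<in>UNIV. \<bar>x$j - y$j\<bar> powr p)"
    by (intro sum_pos2[of UNIV i]) auto
  then show ?thesis
    unfolding lp_dist_def by simp
qed

lemma lp_dist_le_of_coordinate_bound:
  fixes x y :: "real^'k"
  assumes "1 \<le> p" "0 \<le> t" "\<And>i. \<bar>x$i - y$i\<bar> \<le> t"
  shows "lp_dist p x y \<le> real CARD('k) * t"
proof -
  let ?K = "real CARD('k)"
  have "(\<Sum>i\<in>UNIV. \<bar>x$i - y$i\<bar> powr p) \<le> (\<Sum>i\<in>(UNIV::'k set). t powr p)"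
    using assms by (intro sum_mono powr_mono2) auto
  then have "lp_dist p x y \<le> (?K * t powr p) powr (1/p)"
    unfolding lp_dist_def using assms(1) by (auto intro!: powr_mono2 sum_nonneg)
  also have "\<dots> = ?K powr (1/p) * t"
    using assms by (simp add: powr_mult powr_powr)
  also have "\<dots> \<le> ?K powr 1 * t"
    using assms by (intro mult_right_mono powr_mono) auto
  finally show ?thesis
    by simp
qed

lemma abs_diff_le_of_adjacent_floor:
  fixes a b s :: real
  assumes "0 < s" "\<bar>\<lfloor>a / s\<rfloor> - \<lfloor>b / s\<rfloor>\<bar> \<le> 1"
  shows "\<bar>a - b\<bar> \<le> 2 * s"
proof -
  have "\<bar>a / s - b / s\<bar> \<le> 2"
    using assms(2) floor_correct[of "a / s"] floor_correct[of "b / s"] by linarith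
  then show ?thesis
    using assms(1) by (simp add: diff_divide_distrib[symmetric] divide_le_eq)
qed

lemma set_dist_le_lp_dist:
  assumes "finite S" "y \<in> S" "y \<noteq> x"
  shows "set_dist p x S \<le> lp_dist p x y"
  unfolding set_dist_def using assms by (intro Min_le) auto

lemma set_dist_pos:
  fixes S :: "(real^'k) set"
  assumes "1 \<le> p" "finite S" "2 \<le> card S" "q \<in> S"
  shows "0 < set_dist p q S"
proof -
  have "\<not> S \<subseteq> {q}"
    using assms(3) card_mono[of "{q}" S] by auto
  then have "S - {q} \<noteq> {}"
    by auto
  then show ?thesis
    unfolding set_dist_def using assms by (subst Min_gr_iff) (auto intro: lp_dist_pos)
qed

lemma grid_isolated_if_far:
  fixes S :: "(real^'k) set"
  assumes "1 \<le> p" "finite S" "0 < s" "2 * real CARD('k) * s < set_dist p x S"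
  shows "grid_isolated s S x"
  unfolding grid_isolated_def
proof
  assume "\<exists>y\<in>S. y \<noteq> x \<and> (\<forall>i. \<bar>grid_box s y i - grid_box s x i\<bar> \<le> 1)"
  then obtain y where y: "y \<in> S" "y \<noteq> x" "\<And>i. \<bar>grid_box s y i - grid_box s x i\<bar> \<le> 1"
    by blast
  have "\<bar>x$i - y$i\<bar> \<le> 2 * s" for i
    using abs_diff_le_of_adjacent_floor[OF assms(3), of "y$i" "x$i"] y(3)[of i]
    by (simp add: grid_box_def abs_minus_commute)
  then have "lp_dist p x y \<le> 2 * real CARD('k) * s"
    using lp_dist_le_of_coordinate_bound[OF assms(1), of "2 * s" x y] assms(3) by simp
  moreover have "set_dist p x S \<le> lp_dist p x y"
    using set_dist_le_lp_dist[OF assms(2) y(1,2)] .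
  ultimately show False
    using assms(4) by linarith
qed

lemma next_level_subset:
  fixes S :: "(real^'k) set"
  assumes "1 \<le> p" "finite S" "q \<in> S"
  shows "next_level p S q \<subseteq> {x\<in>S. set_dist p x S < set_dist p q S}"
proof (cases "card S \<le> 1")
  case True
  then show ?thesis
    by (simp add: next_level_def)
next
  case False
  define d where "d = set_dist p q S"
  define s where "s = d / (6 * real CARD('k))"
  have "0 < d"
    unfolding d_def using set_dist_pos[OF assms(1,2) _ assms(3)] False by simp
  then have "0 < s" "2 * real CARD('k) * s < d"
    unfolding s_def by simp_all
  then have "set_dist p x S < d" if "\<not> grid_isolated s S x" for x
    using grid_isolated_if_far[OF assms(1,2)] that by force
  then show ?thesis
    using False by (auto simp: next_level_def Let_def d_def s_def)
qed

lemma card_pairs_less_le: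
  fixes g :: "'a \<Rightarrow> 'b::order"
  assumes "finite S"
  shows "2 * (\<Sum>q\<in>S. card {x\<in>S. g x < g q}) \<le> card S ^ 2"
proof -
  define P where "P = Sigma S (\<lambda>q. {x\<in>S. g x < g q})"
  have "finite P" "P \<inter> prod.swap ` P = {}" "P \<union> prod.swap ` P \<subseteq> S \<times> S"
    unfolding P_def using assms by auto
  then have "card P + card (prod.swap ` P) \<le> card (S \<times> S)"
    using assms by (metis card_Un_disjoint card_mono finite_SigmaI finite_imageI)
  moreover have "card (prod.swap ` P) = card P"
    by (simp add: card_image)
  moreover have "card P = (\<Sum>q\<in>S. card {x\<in>S. g x < g q})"
    unfolding P_def using assms by (simp add: card_SigmaI)
  ultimately show ?thesis
    by (simp add: card_cartesian_product power2_eq_square)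
qed

lemma sum_card_next_level_le:
  fixes S :: "(real^'k) set"
  assumes "1 \<le> p" "finite S"
  shows "(\<Sum>q\<in>S. real (card (next_level p S q))) \<le> real (card S) ^ 2 / 2"
proof -
  have "(\<Sum>q\<in>S. card (next_level p S q)) \<le> (\<Sum>q\<in>S. card {x\<in>S. set_dist p x S < set_dist p q S})"
    using assms next_level_subset by (intro sum_mono card_mono) auto
  also have "2 * \<dots> \<le> card S ^ 2"
    using card_pairs_less_le[OF assms(2)] .
  finally have "2 * (\<Sum>q\<in>S. card (next_level p S q)) \<le> card S ^ 2"
    by linarith
  then have "2 * real (\<Sum>q\<in>S. card (next_level p S q)) \<le> real (card S) ^ 2"
    by (metis of_nat_le_iff of_nat_mult of_nat_numeral of_nat_power)
  then show ?thesis
    by simp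
qed

lemma prob_levels_fuel_Suc_gt:
  assumes "finite S" "S \<noteq> {}"
  shows "measure_pmf.prob (levels_fuel (Suc f) p S) {l. Suc m < l} =
           (\<Sum>q\<in>S. measure_pmf.prob (levels_fuel f p (next_level p S q)) {l. m < l}) / card S"
  using assms by (simp add: measure_bind_pmf_of_set vimage_def)

lemma prob_levels_fuel_gt_le:
  fixes S :: "(real^'k) set"
  assumes "1 \<le> p" "finite S"
  shows "measure_pmf.prob (levels_fuel f p S) {l. m < l} \<le> real (card S) * (1/2) ^ m"
  using assms(2)
proof (induction f arbitrary: S m)
  case 0
  then show ?case
    by simp
next
  case (Suc f)
  show ?case
  proof (cases "S = {}")
    case True
    then show ?thesis
      by simp
  next
    case False
    then have n_ge_1: "1 \<le> real (card S)"
      using Suc.prems by (simp add: Suc_leI card_gt_0_iff)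
    show ?thesis
    proof (cases m)
      case 0
      have "measure_pmf.prob (levels_fuel (Suc f) p S) {l. m < l} \<le> 1"
        by (rule measure_pmf.prob_le_1)
      then show ?thesis
        using n_ge_1 by (simp only: 0 power_0 mult_1_right)
    next
      case (Suc m')
      have "\<And>q. finite (next_level p S q)"
        using Suc.prems by (rule finite_subset[rotated]) (auto simp: next_level_def Let_def)
      then have "(\<Sum>q\<in>S. measure_pmf.prob (levels_fuel f p (next_level p S q)) {l. m' < l})
          \<le> (\<Sum>q\<in>S. real (card (next_level p S q))) * (1/2) ^ m'"
        by (simp add: sum_distrib_right sum_mono Suc.IH)
      also have "\<dots> \<le> real (card S) ^ 2 / 2 * (1/2) ^ m'"
        by (intro mult_right_mono sum_card_next_level_le assms(1) Suc.prems) simp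
      finally have sum_le: "(\<Sum>q\<in>S. measure_pmf.prob (levels_fuel f p (next_level p S q)) {l. m' < l})
          \<le> real (card S) ^ 2 / 2 * (1/2) ^ m'" .
      have "measure_pmf.prob (levels_fuel (Suc f) p S) {l. m < l}
          = (\<Sum>q\<in>S. measure_pmf.prob (levels_fuel f p (next_level p S q)) {l. m' < l}) / card S"
        unfolding Suc by (rule prob_levels_fuel_Suc_gt[OF Suc.prems False])
      also have "\<dots> \<le> real (card S) ^ 2 / 2 * (1/2) ^ m' / card S"
        by (rule divide_right_mono[OF sum_le]) simp
      also have "\<dots> = real (card S) * (1/2) ^ m"
        using n_ge_1 Suc by (simp add: power2_eq_square)
      finally show ?thesis .
    qed
  qed
qed

lemma mult_half_pow_le_inverse:
  fixes n :: real
  assumes "2 \<le> n" "3 * log 2 n \<le> real m + 1"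
  shows "n * (1/2) ^ m \<le> 1 / n"
proof -
  have "n ^ 3 = (2 powr log 2 n) powr 3"
    using assms(1) by simp
  also have "\<dots> = 2 powr (3 * log 2 n)"
    by (simp only: powr_powr mult.commute)
  also have "\<dots> \<le> 2 powr (real m + 1)"
    using assms(2) by (intro powr_mono) auto
  also have "\<dots> = 2 * 2 ^ m"
    by (simp add: powr_add powr_realpow)
  finally have "n * (1/2) ^ m \<le> n * (2 / n ^ 3)"
    using assms(1) by (simp add: field_simps)
  also have "\<dots> \<le> 1 / n"
    using assms(1) by (simp add: field_simps power3_eq_cube)
  finally show ?thesis .
qed

theorem lemma4p1:
  fixes p :: real
  assumes "1 \<le> p"
  shows "\<exists>C c n0. C > 0 \<and> c > 0 \<and>
           (\<forall>S :: (real^'k) set. finite S \<and> card S \<ge> n0 \<longrightarrow>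
              measure_pmf.prob (num_levels p S) {l. real l > C * ln (real (card S))}
                \<le> 1 / real (card S) powr c)"
proof (rule exI[of _ "3 / ln 2"], rule exI[of _ 1], rule exI[of _ 2], intro conjI allI impI)
  fix S :: "(real^'k) set"
  assume S: "finite S \<and> 2 \<le> card S"
  define n where "n = real (card S)"
  define m where "m = nat \<lfloor>3 * log 2 n\<rfloor>"
  have "2 \<le> n"
    using S by (simp add: n_def)
  then have "0 \<le> log 2 n"
    by simp
  then have m: "3 * log 2 n \<le> real m + 1" "{l. real l > 3 * log 2 n} \<subseteq> {l. m < l}"
    unfolding m_def by (linarith, auto simp: nat_less_iff floor_less_iff)
  have "3 / ln 2 * ln n = 3 * log 2 n"
    by (simp add: log_def)
  then have "measure_pmf.prob (num_levels p S) {l. real l > 3 / ln 2 * ln n}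
      \<le> measure_pmf.prob (num_levels p S) {l. m < l}"
    using m(2) by (simp add: measure_pmf.finite_measure_mono)
  also have "\<dots> \<le> n * (1/2) ^ m"
    unfolding num_levels_def n_def using prob_levels_fuel_gt_le assms S by blast
  also have "\<dots> \<le> 1 / n"
    using mult_half_pow_le_inverse \<open>2 \<le> n\<close> m(1) .
  finally show "measure_pmf.prob (num_levels p S) {l. real l > 3 / ln 2 * ln (real (card S))}
      \<le> 1 / real (card S) powr 1"
    using \<open>2 \<le> n\<close> by (simp add: n_def)
qed simp_all

end
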